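(* Let $\mathcal{R}$ be a field and $(\mathcal{C}^{\bullet},\partial)$ a bigraded cochain complex of $\mathcal{R}$-vector spaces as in the context. Then there are vector space isomorphisms \[ B^{1}(\mathcal{C},\partial)\cong B^{1}(\mathcal{N}_{0},\overline{\partial})\oplus B^{1}(\mathcal{C}^{0,\bullet},\partial_{0,1}),\qquad Z^{1}(\mathcal{C},\partial)\cong Z^{1}(\mathcal{N}_{0},\overline{\partial})\oplus\ker(\rho_{1}), \] \[ H^{1}(\mathcal{C},\partial)\cong H^{1}(\mathcal{N}_{0},\overline{\partial})\oplus\frac{\ker(\rho_{1})}{B^{1}(\mathcal{C}^{0,\bullet},\partial_{0,1})}. \]
   Context: Setting: $\mathcal{C}^{k}=\bigoplus_{p+q=k}\mathcal{C}^{p,q}$ with $\mathcal{C}^{p,q}=\{0\}$ if $p<0$ or $q<0$; $\partial$ is linear of degree $1$, $\partial^{2}=0$, $\partial=\partial_{2,-1}+\partial_{1,0}+\partial_{0,1}$ with $\partial_{i,j}(\mathcal{C}^{p,q})\subseteq\mathcal{C}^{p+i,q+j}$. For $\eta\in\mathcal{C}^k$, $\eta_{p,q}$ is its $\mathcal{C}^{p,q}$-component; $\pi_{1}:\mathcal{C}\to\bigoplus_{j\geq1}\mathcal{C}^{i,j}$ is the projection along the bigrading. $(\mathcal{C}^{0,\bullet},\partial_{0,1})$ is a cochain complex. $\mathcal{N}_{0}:=\bigoplus_{p}\ker(\partial_{0,1}:\mathcal{C}^{p,0}\to\mathcal{C}^{p,1})$ (degree $p$ part in $\mathcal{C}^{p,0}$)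 is a subcomplex of $(\mathcal{C},\partial)$ with differential $\overline\partial:=\partial|_{\mathcal{N}_0}=\partial_{1,0}|_{\mathcal{N}_0}$. $\mathcal{A}^{k}:=\{\pi_{1}(\eta)\mid\eta\in\mathcal{C}^{k},\ \pi_{1}(\partial\eta)=0\}$; for $\xi\in\mathcal{A}^{k}$ and any $\eta\in\mathcal{C}^{k}$ with $\pi_{1}\eta=\xi$, $\pi_{1}(\partial\eta)=0$, the element $\partial_{2,-1}\xi_{k-1,1}+\partial_{1,0}\eta_{k,0}$ is a cocycle of $(\mathcal{N}_{0},\overline\partial)$ whose class depends only on $\xi$, defining the linear map $\rho_{k}:\mathcal{A}^{k}\to H^{k+1}(\mathcal{N}_{0},\overline{\partial})$. *)

theory Defs
  imports Main "HOL.Vector_Spaces" "HOL-Library.Function_Algebras" "HOL-Library.Product_Plus"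
begin

(* Conventions.
   'r :: field  is the ground field R; 'v is an ambient R-vector space (with scalar
   multiplication scale) that contains all the bigraded pieces C p q = C^{p,q}
   (p, q >= 0; pieces with a negative index are {0} and simply do not occur).
   An element of the total space C^k = (+)_{p+q=k} C^{p,q} is represented by its
   family of components  eta :: nat => nat => 'v  (eta p q = eta_{p,q}).  *)

type_synonym 'v fam = "nat \<Rightarrow> nat \<Rightarrow> 'v"

definition lin_on :: "('r \<Rightarrow> 'a \<Rightarrow> 'a::ab_group_add) \<Rightarrow> ('r \<Rightarrow> 'b \<Rightarrow> 'b::ab_group_add)
    \<Rightarrow> 'a set \<Rightarrow> ('a \<Rightarrow> 'b) \<Rightarrow> bool" where
  "lin_on s1 s2 S f \<longleftrightarrow>
     (\<forall>x\<in>S. \<forall>y\<in>S. f (x + y) = f x + f y) \<and> (\<forall>c. \<forall>x\<in>S. f (s1 c x) = s2 c (f x))"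

definition lin_iso :: "('r \<Rightarrow> 'a \<Rightarrow> 'a::ab_group_add) \<Rightarrow> ('r \<Rightarrow> 'b \<Rightarrow> 'b::ab_group_add)
    \<Rightarrow> 'a set \<Rightarrow> 'b set \<Rightarrow> bool" where
  "lin_iso s1 s2 A B \<longleftrightarrow> (\<exists>f. lin_on s1 s2 A f \<and> bij_betw f A B)"

text \<open>Isomorphism of quotient spaces A/B and D/E (B a subspace of A, E a subspace of D),
  expressed as: some linear map f : A -> D induces a well-defined bijective map
  A/B -> D/E, i.e. f(A) + E = D and f^{-1}(E) \<inter> A = B.\<close>
definition quot_iso :: "('r \<Rightarrow> 'a \<Rightarrow> 'a::ab_group_add) \<Rightarrow> ('r \<Rightarrow> 'b \<Rightarrow> 'b::ab_group_add)
    \<Rightarrow> 'a set \<Rightarrow> 'a set \<Rightarrow> 'b set \<Rightarrow> 'b set \<Rightarrow> bool" where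
  "quot_iso s1 s2 A B D E \<longleftrightarrow>
     (\<exists>f. lin_on s1 s2 A f \<and> f ` A \<subseteq> D \<and> (\<forall>y\<in>D. \<exists>x\<in>A. y - f x \<in> E)
          \<and> (\<forall>x\<in>A. f x \<in> E \<longleftrightarrow> x \<in> B))"

definition fscale :: "('r \<Rightarrow> 'v \<Rightarrow> 'v) \<Rightarrow> 'r \<Rightarrow> 'v fam \<Rightarrow> 'v fam" where
  "fscale scale c eta = (\<lambda>p q. scale c (eta p q))"

definition pscale :: "('r \<Rightarrow> 'a \<Rightarrow> 'a) \<Rightarrow> ('r \<Rightarrow> 'b \<Rightarrow> 'b) \<Rightarrow> 'r \<Rightarrow> 'a \<times> 'b \<Rightarrow> 'a \<times> 'b" where
  "pscale s1 s2 c xy = (s1 c (fst xy), s2 c (snd xy))"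

definition cochains :: "(nat \<Rightarrow> nat \<Rightarrow> 'v::zero set) \<Rightarrow> nat \<Rightarrow> 'v fam set" where
  "cochains C k = {eta. (\<forall>p q. p + q = k \<longrightarrow> eta p q \<in> C p q) \<and> (\<forall>p q. p + q \<noteq> k \<longrightarrow> eta p q = 0)}"

text \<open>The total differential  \<partial> = \<partial>_{2,-1} + \<partial>_{1,0} + \<partial>_{0,1}  on families;
  d21 p q : C^{p,q} -> C^{p+2,q-1},  d10 p q : C^{p,q} -> C^{p+1,q},  d01 p q : C^{p,q} -> C^{p,q+1}.\<close>
definition dtot :: "(nat \<Rightarrow> nat \<Rightarrow> 'v \<Rightarrow> 'v::comm_monoid_add) \<Rightarrow> (nat \<Rightarrow> nat \<Rightarrow> 'v \<Rightarrow> 'v)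
    \<Rightarrow> (nat \<Rightarrow> nat \<Rightarrow> 'v \<Rightarrow> 'v) \<Rightarrow> 'v fam \<Rightarrow> 'v fam" where
  "dtot d21 d10 d01 eta = (\<lambda>p q.
      (if 2 \<le> p then d21 (p - 2) (q + 1) (eta (p - 2) (q + 1)) else 0)
    + (if 1 \<le> p then d10 (p - 1) q (eta (p - 1) q) else 0)
    + (if 1 \<le> q then d01 p (q - 1) (eta p (q - 1)) else 0))"

definition bigraded_complex :: "('r::field \<Rightarrow> 'v \<Rightarrow> 'v::ab_group_add) \<Rightarrow> (nat \<Rightarrow> nat \<Rightarrow> 'v set)
    \<Rightarrow> (nat \<Rightarrow> nat \<Rightarrow> 'v \<Rightarrow> 'v) \<Rightarrow> (nat \<Rightarrow> nat \<Rightarrow> 'v \<Rightarrow> 'v) \<Rightarrow> (nat \<Rightarrow> nat \<Rightarrow> 'v \<Rightarrow> 'v) \<Rightarrow> bool" where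
  "bigraded_complex scale C d21 d10 d01 \<longleftrightarrow>
     vector_space scale
   \<and> (\<forall>p q. module.subspace scale (C p q))
   \<and> (\<forall>p q. lin_on scale scale (C p q) (d21 p q)
            \<and> d21 p q ` C p q \<subseteq> (if q = 0 then {0} else C (p + 2) (q - 1)))
   \<and> (\<forall>p q. lin_on scale scale (C p q) (d10 p q) \<and> d10 p q ` C p q \<subseteq> C (p + 1) q)
   \<and> (\<forall>p q. lin_on scale scale (C p q) (d01 p q) \<and> d01 p q ` C p q \<subseteq> C p (q + 1))
   \<and> (\<forall>k. \<forall>eta\<in>cochains C k. dtot d21 d10 d01 (dtot d21 d10 d01 eta) = (\<lambda>p q. 0))"

definition pi1 :: "'v::zero fam \<Rightarrow> 'v fam" where
  "pi1 eta = (\<lambda>p q. if 1 \<le> q then eta p q else 0)"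

definition emb01 :: "'v::zero \<Rightarrow> 'v fam" where
  "emb01 x = (\<lambda>p q. if p = 0 \<and> q = 1 then x else 0)"

text \<open>The subcomplex N_0: N_0^p = ker(\<partial>_{0,1} : C^{p,0} -> C^{p,1}), differential \<partial>_{1,0}.\<close>
definition N0 :: "(nat \<Rightarrow> nat \<Rightarrow> 'v set) \<Rightarrow> (nat \<Rightarrow> nat \<Rightarrow> 'v \<Rightarrow> 'v::zero) \<Rightarrow> nat \<Rightarrow> 'v set" where
  "N0 C d01 p = {x \<in> C p 0. d01 p 0 x = 0}"

definition Z_N0 :: "(nat \<Rightarrow> nat \<Rightarrow> 'v set) \<Rightarrow> (nat \<Rightarrow> nat \<Rightarrow> 'v \<Rightarrow> 'v::zero)
    \<Rightarrow> (nat \<Rightarrow> nat \<Rightarrow> 'v \<Rightarrow> 'v) \<Rightarrow> nat \<Rightarrow> 'v set" where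
  "Z_N0 C d10 d01 k = {x \<in> N0 C d01 k. d10 k 0 x = 0}"

definition B_N0 :: "(nat \<Rightarrow> nat \<Rightarrow> 'v set) \<Rightarrow> (nat \<Rightarrow> nat \<Rightarrow> 'v \<Rightarrow> 'v::zero)
    \<Rightarrow> (nat \<Rightarrow> nat \<Rightarrow> 'v \<Rightarrow> 'v) \<Rightarrow> nat \<Rightarrow> 'v set" where
  "B_N0 C d10 d01 k = (if k = 0 then {0} else d10 (k - 1) 0 ` N0 C d01 (k - 1))"

definition Z_C where
  "Z_C C d21 d10 d01 k = {eta \<in> cochains C k. dtot d21 d10 d01 eta = (\<lambda>p q. 0)}"

definition B_C where
  "B_C C d21 d10 d01 k = (if k = 0 then {\<lambda>p q. 0} else dtot d21 d10 d01 ` cochains C (k - 1))"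

definition B1_col0 :: "(nat \<Rightarrow> nat \<Rightarrow> 'v set) \<Rightarrow> (nat \<Rightarrow> nat \<Rightarrow> 'v \<Rightarrow> 'v) \<Rightarrow> 'v set" where
  "B1_col0 C d01 = d01 0 0 ` C 0 0"

definition A_sp where
  "A_sp C d21 d10 d01 k = {pi1 eta | eta. eta \<in> cochains C k \<and> pi1 (dtot d21 d10 d01 eta) = (\<lambda>p q. 0)}"

text \<open>\<rho>_1 : A^1 -> H^2(N_0): the class (as a coset of B^2(N_0)) of
  \<partial>_{2,-1} \<xi>_{0,1} + \<partial>_{1,0} \<eta>_{1,0} for any \<eta> \<in> C^1 with \<pi>_1 \<eta> = \<xi>, \<pi>_1(\<partial>\<eta>) = 0.\<close>
definition rho1 where
  "rho1 C d21 d10 d01 xi =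
     (let eta = (SOME eta. eta \<in> cochains C 1 \<and> pi1 eta = xi \<and> pi1 (dtot d21 d10 d01 eta) = (\<lambda>p q. 0))
      in {d21 0 1 (xi 0 1) + d10 1 0 (eta 1 0) + b | b. b \<in> B_N0 C d10 d01 2})"

definition ker_rho1 where
  "ker_rho1 C d21 d10 d01 = {xi \<in> A_sp C d21 d10 d01 1. rho1 C d21 d10 d01 xi = B_N0 C d10 d01 2}"

end

(* Degree-1 cochains are pairs (a, b) with a in C^{1,0} and b in C^{0,1}; pi_1 forgets a.
   On cocycles, the kernel of pi_1 is Z^1(N_0) (via a), and its image is ker rho_1: a lift
   (a, b) of xi with pi_1(d(a, b)) = 0 can be corrected by some n in N_0^1 to a cocycle
   (a - n, b) exactly when d_{2,-1} b + d_{1,0} a, the representative of rho_1 xi, equals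
   d_{1,0} n, i.e. lies in B^2(N_0).  A linear section of pi_1 that maps pi_1(B^1) into B^1 then splits Z^1 as
   Z^1(N_0) x ker rho_1 and, compatibly, B^1 as B^1(N_0) x B^1(C^{0,*}), which gives the
   second and third isomorphisms.  Splitting B^1 along its (0,1)-component in the same way
   gives the first one. *)

theory Submission
  imports Defs
begin

lemma lin_on_zero:
  assumes "lin_on s1 s2 V f" "0 \<in> V"
  shows "f 0 = 0"
proof -
  have "f (0 + 0) = f 0 + f 0" using assms unfolding lin_on_def by blast
  then show ?thesis by simp
qed

lemma lin_on_diff:
  assumes "module s1" "module.subspace s1 V" "lin_on s1 s2 V f" "x \<in> V" "y \<in> V"
  shows "f (x - y) = f x - f y"
proof -
  have "x - y \<in> V" using assms module.subspace_diff by blast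
  then have "f (x - y + y) = f (x - y) + f y" using assms unfolding lin_on_def by blast
  then show ?thesis by (simp add: algebra_simps)
qed

lemma lin_on_subset: "lin_on s1 s2 V f \<Longrightarrow> U \<subseteq> V \<Longrightarrow> lin_on s1 s2 U f"
  unfolding lin_on_def by blast

lemma subspace_kernel_lin_on:
  assumes "module s1" "module s2" "module.subspace s1 V" "lin_on s1 s2 V f"
  shows "module.subspace s1 {x \<in> V. f x = 0}"
  using assms lin_on_zero[OF assms(4)]
  by (auto simp: module.subspace_def lin_on_def module.scale_zero_right)

lemma subspace_image_lin_on:
  assumes "module s1" "module s2" "module.subspace s1 V" "lin_on s1 s2 V f"
  shows "module.subspace s2 (f ` V)"
proof -
  interpret m1: module s1 by fact
  interpret m2: module s2 by fact
  have "0 \<in> V" using assms(3) m1.subspace_0 by blast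
  then have "f 0 \<in> f ` V" by (rule imageI)
  moreover have "f u + f v \<in> f ` V" if "u \<in> V" "v \<in> V" for u v
  proof (rule rev_image_eqI)
    show "u + v \<in> V" using assms(3) that m1.subspace_add by blast
    show "f u + f v = f (u + v)" using assms(4) that unfolding lin_on_def by simp
  qed
  moreover have "s2 c (f u) \<in> f ` V" if "u \<in> V" for c u
  proof (rule rev_image_eqI)
    show "s1 c u \<in> V" using assms(3) that m1.subspace_scale by blast
    show "s2 c (f u) = f (s1 c u)" using assms(4) that unfolding lin_on_def by simp
  qed
  ultimately show ?thesis
    using lin_on_zero[OF assms(4) \<open>0 \<in> V\<close>] unfolding m2.subspace_def by auto
qed

lemma coset_eq_subspace_iff:
  assumes "module s" "module.subspace s S"
  shows "{c + b | b. b \<in> S} = S \<longleftrightarrow> c \<in> S"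
proof
  assume "{c + b | b. b \<in> S} = S"
  moreover have "c + 0 \<in> {c + b | b. b \<in> S}" using assms module.subspace_0 by blast
  ultimately show "c \<in> S" by simp
next
  assume c: "c \<in> S"
  show "{c + b | b. b \<in> S} = S"
  proof (intro set_eqI iffI)
    fix x assume "x \<in> {c + b | b. b \<in> S}"
    then show "x \<in> S" using assms c module.subspace_add by blast
  next
    fix x assume "x \<in> S"
    then have "x - c \<in> S" using assms c module.subspace_diff by blast
    then show "x \<in> {c + b | b. b \<in> S}" by force
  qed
qed

lemma exists_linear_section:
  assumes p: "Vector_Spaces.linear s1 s2 p" and V: "module.subspace s1 V"
    and V0: "module.subspace s1 V0" "V0 \<subseteq> V"
  shows "\<exists>s. Vector_Spaces.linear s2 s1 s \<and> (\<forall>w\<in>p ` V. s w \<in> V \<and> p (s w) = w)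
      \<and> s ` p ` V0 \<subseteq> V0"
proof -
  interpret linear s1 s2 p by fact
  interpret sp: vector_space_pair s2 s1 ..
  interpret pp: vector_space_pair s2 s2 ..
  obtain B0 where B0: "B0 \<subseteq> p ` V0" "vs2.independent B0" "p ` V0 \<subseteq> vs2.span B0"
    by (rule vs2.maximal_independent_subset)
  obtain B where B: "B0 \<subseteq> B" "B \<subseteq> p ` V" "vs2.independent B" "p ` V \<subseteq> vs2.span B"
    by (rule vs2.maximal_independent_subset_extend[of B0 "p ` V", OF _ B0(2)]) (use B0(1) V0(2) in blast)
  \<comment> \<open>preimages of the basis of \<open>p ` V0\<close> are chosen in \<open>V0\<close>, so \<open>s\<close> maps \<open>p ` V0\<close> into \<open>V0\<close>\<close>
  have "\<forall>b\<in>B. \<exists>v. v \<in> (if b \<in> B0 then V0 else V) \<and> p v = b"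
    using B(2) B0(1) by auto
  then obtain g where g: "\<And>b. b \<in> B \<Longrightarrow> g b \<in> (if b \<in> B0 then V0 else V) \<and> p (g b) = b"
    by metis
  have g_V: "g b \<in> V" and g_V0: "b \<in> B0 \<Longrightarrow> g b \<in> V0" if "b \<in> B" for b
    using g[OF that] V0(2) by (auto split: if_splits)
  define s where "s = sp.construct B g"
  have s: "Vector_Spaces.linear s2 s1 s"
    unfolding s_def by (rule sp.linear_construct[OF B(3)])
  then interpret s: linear s2 s1 s .
  have s_B: "s b = g b" if "b \<in> B" for b
    unfolding s_def by (rule sp.construct_basis[OF B(3) that])
  have "g ` B \<subseteq> V" using g_V by blast
  then have s_V: "s w \<in> V" for w
    using sp.construct_in_span[OF B(3)] vs1.span_minimal[OF _ V] unfolding s_def by blast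
  have "p (s b) = b" if "b \<in> B" for b
    using s_B g that by simp
  then have s_section: "p (s w) = w" if "w \<in> p ` V" for w
    using pp.linear_eq_on[OF Vector_Spaces.linear_compose[OF s p] vs2.linear_id, of w B] B(4) that
    by auto
  have "s ` B0 \<subseteq> V0"
    using g_V0 s_B B(1) by auto
  then have "s ` vs2.span B0 \<subseteq> V0"
    unfolding s.span_image[symmetric] by (rule vs1.span_minimal[OF _ V0(1)])
  then have "s ` p ` V0 \<subseteq> V0"
    using B0(3) by blast
  moreover have "\<forall>w\<in>p ` V. s w \<in> V \<and> p (s w) = w"
    using s_V s_section by blast
  ultimately show ?thesis
    using s by (intro exI[of _ s] conjI)
qed

lemma exists_iso_kernel_times_image:
  assumes p: "Vector_Spaces.linear s1 s2 p" and q: "Vector_Spaces.linear s1 s3 q"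
    and V: "module.subspace s1 V" and V0: "module.subspace s1 V0" "V0 \<subseteq> V"
    and q_inj: "inj_on q {v \<in> V. p v = 0}"
  shows "\<exists>f. lin_on s1 (pscale s3 s2) V f
      \<and> bij_betw f V (q ` {v \<in> V. p v = 0} \<times> p ` V)
      \<and> (\<forall>x\<in>V. f x \<in> q ` {v \<in> V0. p v = 0} \<times> p ` V0 \<longleftrightarrow> x \<in> V0)"
proof -
  interpret p: linear s1 s2 p by fact
  have q_add: "q (x + y) = q x + q y" and q_diff: "q (x - y) = q x - q y"
    and q_scale: "q (s1 c x) = s3 c (q x)" for x y c
    using module_hom.add module_hom.diff module_hom.scale module_hom_linearI[OF q] by blast+
  obtain s where s: "Vector_Spaces.linear s2 s1 s"
    and s_section: "\<forall>w\<in>p ` V. s w \<in> V \<and> p (s w) = w"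
    and s_V0: "s ` p ` V0 \<subseteq> V0"
    using exists_linear_section[OF p V V0] by (elim exE conjE)
  interpret s: linear s2 s1 s by fact
  \<comment> \<open>\<open>r\<close> is the projection of \<open>V\<close> onto \<open>ker p\<close> along \<open>s (p ` V)\<close>\<close>
  define r where "r x = x - s (p x)" for x
  have r_ker: "r x \<in> V \<and> p (r x) = 0" if "x \<in> V" for x
    using s_section that V p.vs1.subspace_diff unfolding r_def by (auto simp: p.diff)
  have r_V0: "r x \<in> V0" if "x \<in> V0" for x
    using s_V0 that V0(1) p.vs1.subspace_diff unfolding r_def by blast
  define f where "f x = (q (r x), p x)" for x
  have r_add: "r (x + y) = r x + r y" and r_scale: "r (s1 c x) = s1 c (r x)" for x y c
    unfolding r_def
    by (simp_all add: p.add p.scale s.add s.scale algebra_simps)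
  have f_lin: "lin_on s1 (pscale s3 s2) V f"
    unfolding lin_on_def f_def pscale_def by (simp add: r_add r_scale q_add q_scale p.add p.scale)
  have f_inj: "inj_on f V"
  proof (rule inj_onI)
    fix x y assume "x \<in> V" "y \<in> V" "f x = f y"
    then have "p x = p y" "r x = r y"
      using r_ker inj_onD[OF q_inj] unfolding f_def by auto
    then show "x = y" unfolding r_def by simp
  qed
  have f_image: "f ` V = q ` {v \<in> V. p v = 0} \<times> p ` V"
  proof (intro equalityI subsetI)
    fix y assume "y \<in> f ` V"
    then show "y \<in> q ` {v \<in> V. p v = 0} \<times> p ` V" using r_ker unfolding f_def by auto
  next
    fix y assume "y \<in> q ` {v \<in> V. p v = 0} \<times> p ` V"
    then obtain v w where y: "y = (q v, w)" and v: "v \<in> V" "p v = 0" and w: "w \<in> p ` V"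
      by blast
    have sw: "s w \<in> V" "p (s w) = w" using s_section w by auto
    have "v + s w \<in> V" using V v sw p.vs1.subspace_add by blast
    moreover have "f (v + s w) = y"
      using v sw unfolding f_def r_def y by (simp add: p.add)
    ultimately show "y \<in> f ` V" by (rule rev_image_eqI[OF _ sym])
  qed
  have f_V0: "f x \<in> q ` {v \<in> V0. p v = 0} \<times> p ` V0 \<longleftrightarrow> x \<in> V0" if x: "x \<in> V" for x
  proof
    assume "f x \<in> q ` {v \<in> V0. p v = 0} \<times> p ` V0"
    then obtain v where v: "v \<in> V0" "p v = 0" "q (r x) = q v" and px: "p x \<in> p ` V0"
      unfolding f_def by auto
    have "r x = v" using inj_onD[OF q_inj v(3)] r_ker[OF x] v V0(2) by blast
    then have "x = v + s (p x)" unfolding r_def by (simp add: algebra_simps)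
    then show "x \<in> V0" using V0(1) v(1) s_V0 px p.vs1.subspace_add by (metis image_subset_iff)
  next
    assume "x \<in> V0"
    then show "f x \<in> q ` {v \<in> V0. p v = 0} \<times> p ` V0"
      using r_V0 r_ker[OF x] unfolding f_def by auto
  qed
  show ?thesis
    using f_lin f_inj f_image f_V0 by (intro exI[of _ f] conjI ballI) (simp_all add: bij_betw_def)
qed

lemma quot_iso_if_bij_betw:
  assumes "lin_on s1 s2 A f" "bij_betw f A D" "0 \<in> E" "\<forall>x\<in>A. f x \<in> E \<longleftrightarrow> x \<in> B"
  shows "quot_iso s1 s2 A B D E"
  unfolding quot_iso_def
proof (intro exI conjI ballI)
  show "lin_on s1 s2 A f" "f ` A \<subseteq> D" using assms(1,2) bij_betw_imp_surj_on by blast+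
  show "f x \<in> E \<longleftrightarrow> x \<in> B" if "x \<in> A" for x using assms(4) that by blast
  fix y assume "y \<in> D"
  then obtain x where "x \<in> A" "y = f x" using assms(2) by (auto simp: bij_betw_def)
  moreover have "y - f x \<in> E" using assms(3) \<open>y = f x\<close> by simp
  ultimately show "\<exists>x\<in>A. y - f x \<in> E" by blast
qed

lemma vector_space_fscale: "vector_space s \<Longrightarrow> vector_space (fscale s)"
  by (simp add: vector_space_def fscale_def fun_eq_iff)

lemma linear_pi1:
  assumes "vector_space s"
  shows "Vector_Spaces.linear (fscale s) (fscale s) pi1"
proof -
  interpret vector_space s by fact
  show ?thesis
    by (simp add: linear_iff vector_space_fscale assms pi1_def fscale_def fun_eq_iff)
qed

lemma linear_component: "vector_space s \<Longrightarrow> Vector_Spaces.linear (fscale s) s (\<lambda>eta. eta p q)"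
  by (simp add: linear_iff vector_space_fscale fscale_def)

definition cochain0 :: "'v::zero \<Rightarrow> 'v fam" where
  "cochain0 x = (\<lambda>p q. if p = 0 \<and> q = 0 then x else 0)"

definition cochain1 :: "'v::zero \<Rightarrow> 'v \<Rightarrow> 'v fam" where
  "cochain1 a b = (\<lambda>p q. if p = 1 \<and> q = 0 then a else if p = 0 \<and> q = 1 then b else 0)"

(* One_nat_def is a simp rule, so the Suc 0 forms are needed as well. *)
lemma cochain1_components [simp]:
  "cochain1 a b 1 0 = a" "cochain1 a b 0 1 = b" "cochain1 a b (Suc 0) 0 = a" "cochain1 a b 0 (Suc 0) = b"
  by (simp_all add: cochain1_def)

lemma pi1_cochain1: "pi1 (cochain1 a b) = emb01 b"
  by (auto simp: pi1_def cochain1_def emb01_def fun_eq_iff)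

lemma emb01_inject [simp]: "emb01 b = emb01 b' \<longleftrightarrow> b = b'"
  by (metis emb01_def)

lemma emb01_zero: "emb01 0 = 0"
  by (simp add: emb01_def fun_eq_iff)

lemma emb01_eq_0_iff [simp]: "emb01 b = 0 \<longleftrightarrow> b = 0"
  by (metis emb01_inject emb01_zero)

lemma cochains_0: "cochains C 0 = cochain0 ` C 0 0"
  by (auto simp: cochains_def cochain0_def fun_eq_iff image_iff)

lemma cochains_1: "cochains C 1 = {cochain1 a b | a b. a \<in> C 1 0 \<and> b \<in> C 0 1}"
proof (intro equalityI subsetI)
  fix eta assume eta: "eta \<in> cochains C 1"
  then have "eta = cochain1 (eta 1 0) (eta 0 1)"
    by (auto simp: cochains_def cochain1_def fun_eq_iff)
  moreover have "eta 1 0 \<in> C 1 0" "eta 0 1 \<in> C 0 1"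
    using eta by (simp_all add: cochains_def)
  ultimately show "eta \<in> {cochain1 a b | a b. a \<in> C 1 0 \<and> b \<in> C 0 1}" by blast
qed (auto simp: cochains_def cochain1_def add_is_1)

lemma pi1_eq_0_iff: "eta \<in> cochains C 1 \<Longrightarrow> pi1 eta = 0 \<longleftrightarrow> eta 0 1 = 0"
  unfolding cochains_1 by (auto simp: pi1_cochain1)

lemma Collect_pi1_eq_0:
  "S \<subseteq> cochains C 1 \<Longrightarrow> {eta \<in> S. pi1 eta = 0} = {eta \<in> S. eta 0 1 = 0}"
  using pi1_eq_0_iff by blast

lemma inj_on_component10: "inj_on (\<lambda>eta. eta 1 0) {eta \<in> cochains C 1. eta 0 1 = 0}"
  unfolding cochains_1 by (auto intro: inj_onI)

(* The hypotheses of bigraded_complex that are used. *)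
locale bigraded_cochain_complex = vector_space scale
  for scale :: "'r::field \<Rightarrow> 'v \<Rightarrow> 'v::ab_group_add" +
  fixes C :: "nat \<Rightarrow> nat \<Rightarrow> 'v set"
    and d21 d10 d01 :: "nat \<Rightarrow> nat \<Rightarrow> 'v \<Rightarrow> 'v"
  assumes subspace_C: "subspace (C p q)"
    and lin_on_d21: "lin_on scale scale (C p q) (d21 p q)"
    and lin_on_d10: "lin_on scale scale (C p q) (d10 p q)"
    and lin_on_d01: "lin_on scale scale (C p q) (d01 p q)"
    and d10_into: "d10 p q ` C p q \<subseteq> C (p + 1) q"
    and d01_into: "d01 p q ` C p q \<subseteq> C p (q + 1)"
    and dtot_dtot: "eta \<in> cochains C k \<Longrightarrow> dtot d21 d10 d01 (dtot d21 d10 d01 eta) = (\<lambda>p q. 0)"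

lemma bigraded_cochain_complexI:
  "bigraded_complex scale C d21 d10 d01 \<Longrightarrow> bigraded_cochain_complex scale C d21 d10 d01"
  unfolding bigraded_complex_def bigraded_cochain_complex_def bigraded_cochain_complex_axioms_def
  by (intro conjI allI impI) auto

context bigraded_cochain_complex
begin

lemma zero_mem_C [simp]: "0 \<in> C p q"
  using subspace_C subspace_0 by blast

lemma d21_zero [simp]: "d21 p q 0 = 0"
  and d10_zero [simp]: "d10 p q 0 = 0"
  and d01_zero [simp]: "d01 p q 0 = 0"
  using lin_on_zero[OF lin_on_d21] lin_on_zero[OF lin_on_d10] lin_on_zero[OF lin_on_d01] by simp_all

lemma d10_diff: "x \<in> C p q \<Longrightarrow> y \<in> C p q \<Longrightarrow> d10 p q (x - y) = d10 p q x - d10 p q y"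
  and d01_diff: "x \<in> C p q \<Longrightarrow> y \<in> C p q \<Longrightarrow> d01 p q (x - y) = d01 p q x - d01 p q y"
  using lin_on_diff[OF module_axioms subspace_C lin_on_d10]
    lin_on_diff[OF module_axioms subspace_C lin_on_d01]
  by blast+

lemma cochain_component_mem: "eta \<in> cochains C k \<Longrightarrow> eta p q \<in> C p q"
  unfolding cochains_def by (cases "p + q = k") auto

lemma module_fscale: "module (fscale scale)"
  using vector_space_fscale[OF vector_space_axioms] by (simp add: module_iff_vector_space)

lemma subspace_cochains: "module.subspace (fscale scale) (cochains C k)"
  unfolding module.subspace_def[OF module_fscale]
  by (auto simp: cochains_def fscale_def subspace_C subspace_add subspace_scale)

lemma lin_on_dtot: "lin_on (fscale scale) (fscale scale) (cochains C k) (dtot d21 d10 d01)"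
  using lin_on_d21 lin_on_d10 lin_on_d01 cochain_component_mem
  unfolding lin_on_def dtot_def fscale_def
  by (auto simp: fun_eq_iff algebra_simps)

lemma subspace_Z_C: "module.subspace (fscale scale) (Z_C C d21 d10 d01 k)"
  using subspace_kernel_lin_on[OF module_fscale module_fscale subspace_cochains lin_on_dtot]
  by (simp add: Z_C_def zero_fun_def)

lemma subspace_B_C: "module.subspace (fscale scale) (B_C C d21 d10 d01 k)"
  using subspace_image_lin_on[OF module_fscale module_fscale subspace_cochains lin_on_dtot]
    module.subspace_single_0[OF module_fscale]
  by (simp add: B_C_def zero_fun_def)

lemma subspace_B_N0: "subspace (B_N0 C d10 d01 k)"
proof -
  have "subspace (N0 C d01 p)" for p
    using subspace_kernel_lin_on[OF module_axioms module_axioms subspace_C lin_on_d01]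
    by (simp add: N0_def)
  moreover have "lin_on scale scale (N0 C d01 p) (d10 p 0)" for p
    using lin_on_subset[OF lin_on_d10] by (simp add: N0_def)
  ultimately show ?thesis
    using subspace_image_lin_on[OF module_axioms module_axioms] by (simp add: B_N0_def)
qed

lemma dtot_cochain0: "dtot d21 d10 d01 (cochain0 x) = cochain1 (d10 0 0 x) (d01 0 0 x)"
  by (auto simp: dtot_def cochain0_def cochain1_def fun_eq_iff)

lemma dtot_cochain1:
  "dtot d21 d10 d01 (cochain1 a b) = (\<lambda>p q.
     if p = 2 \<and> q = 0 then d21 0 1 b + d10 1 0 a
     else if p = 1 \<and> q = 1 then d10 0 1 b + d01 1 0 a
     else if p = 0 \<and> q = 2 then d01 0 1 b else 0)"
  by (auto simp: dtot_def cochain1_def fun_eq_iff numeral_2_eq_2)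

lemma dtot_cochain1_eq_0_iff:
  "dtot d21 d10 d01 (cochain1 a b) = (\<lambda>p q. 0) \<longleftrightarrow>
     d01 0 1 b = 0 \<and> d10 0 1 b + d01 1 0 a = 0 \<and> d21 0 1 b + d10 1 0 a = 0"
    (is "?lhs \<longleftrightarrow> ?rhs")
proof
  assume ?lhs
  then have "dtot d21 d10 d01 (cochain1 a b) p q = 0" for p q by simp
  from this[of 2 0] this[of 1 1] this[of 0 2] show ?rhs by (simp add: dtot_cochain1)
qed (simp add: dtot_cochain1 fun_eq_iff)

lemma pi1_dtot_cochain1_eq_0_iff:
  "pi1 (dtot d21 d10 d01 (cochain1 a b)) = (\<lambda>p q. 0) \<longleftrightarrow>
     d01 0 1 b = 0 \<and> d10 0 1 b + d01 1 0 a = 0"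
    (is "?lhs \<longleftrightarrow> ?rhs")
proof
  assume ?lhs
  then have "pi1 (dtot d21 d10 d01 (cochain1 a b)) p q = 0" for p q by simp
  from this[of 1 1] this[of 0 2] show ?rhs by (simp add: dtot_cochain1 pi1_def)
qed (simp add: dtot_cochain1 pi1_def fun_eq_iff)

lemma Z1_eq: "Z_C C d21 d10 d01 1 = {cochain1 a b | a b. a \<in> C 1 0 \<and> b \<in> C 0 1
    \<and> d01 0 1 b = 0 \<and> d10 0 1 b + d01 1 0 a = 0 \<and> d21 0 1 b + d10 1 0 a = 0}"
  unfolding Z_C_def cochains_1 using dtot_cochain1_eq_0_iff by auto

lemma B1_eq: "B_C C d21 d10 d01 1 = (\<lambda>x. cochain1 (d10 0 0 x) (d01 0 0 x)) ` C 0 0"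
  by (simp add: B_C_def cochains_0 image_image dtot_cochain0)

lemma B1_subset_Z1: "B_C C d21 d10 d01 1 \<subseteq> Z_C C d21 d10 d01 1"
proof
  fix y assume "y \<in> B_C C d21 d10 d01 1"
  then obtain x where x: "x \<in> C 0 0" and y: "y = dtot d21 d10 d01 (cochain0 x)"
    by (auto simp: B_C_def cochains_0)
  have "y \<in> cochains C 1"
    using x d10_into d01_into unfolding y dtot_cochain0 cochains_1 by fastforce
  moreover have "dtot d21 d10 d01 y = (\<lambda>p q. 0)"
    unfolding y by (rule dtot_dtot[of _ 0]) (simp add: cochains_0 x)
  ultimately show "y \<in> Z_C C d21 d10 d01 1" by (simp add: Z_C_def)
qed

lemma pi1_mem_image_Z1_iff:
  assumes eta: "eta \<in> cochains C 1" "pi1 (dtot d21 d10 d01 eta) = (\<lambda>p q. 0)"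
  shows "pi1 eta \<in> pi1 ` Z_C C d21 d10 d01 1 \<longleftrightarrow>
           d21 0 1 (eta 0 1) + d10 1 0 (eta 1 0) \<in> B_N0 C d10 d01 2"
proof -
  obtain a b where eta_eq: "eta = cochain1 a b" and a: "a \<in> C 1 0" and b: "b \<in> C 0 1"
    using eta(1) unfolding cochains_1 by blast
  have closed: "d01 0 1 b = 0" "d10 0 1 b + d01 1 0 a = 0"
    using eta(2) unfolding eta_eq pi1_dtot_cochain1_eq_0_iff by simp_all
  have "emb01 b \<in> pi1 ` Z_C C d21 d10 d01 1 \<longleftrightarrow>
          d21 0 1 b + d10 1 0 a \<in> d10 1 0 ` {n \<in> C 1 0. d01 1 0 n = 0}"
  proof
    assume "emb01 b \<in> pi1 ` Z_C C d21 d10 d01 1"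
    then obtain a' where a': "a' \<in> C 1 0" "d10 0 1 b + d01 1 0 a' = 0" "d21 0 1 b + d10 1 0 a' = 0"
      unfolding Z1_eq by (auto simp: pi1_cochain1)
    \<comment> \<open>two lifts of the same \<open>\<xi>\<close> differ by an element of \<open>N\<^sub>0\<^sup>1\<close>\<close>
    have "d01 1 0 a = d01 1 0 a'" using closed(2) a'(2) by (metis add_left_cancel)
    then have "a - a' \<in> C 1 0" "d01 1 0 (a - a') = 0"
      using a a'(1) subspace_C subspace_diff by (auto simp: d01_diff)
    moreover have "d21 0 1 b + d10 1 0 a = d10 1 0 (a - a')"
    proof -
      from a'(3) have "d10 1 0 a' = - d21 0 1 b" by (simp only: add_eq_0_iff)
      then show ?thesis unfolding d10_diff[OF a a'(1)] by simp
    qed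
    ultimately show "d21 0 1 b + d10 1 0 a \<in> d10 1 0 ` {n \<in> C 1 0. d01 1 0 n = 0}" by blast
  next
    assume "d21 0 1 b + d10 1 0 a \<in> d10 1 0 ` {n \<in> C 1 0. d01 1 0 n = 0}"
    then obtain n where n: "n \<in> C 1 0" "d01 1 0 n = 0" "d21 0 1 b + d10 1 0 a = d10 1 0 n"
      by blast
    \<comment> \<open>correcting the lift by \<open>n \<in> N\<^sub>0\<^sup>1\<close> turns it into a cocycle\<close>
    have "a - n \<in> C 1 0" using a n(1) subspace_C subspace_diff by blast
    moreover have "d10 0 1 b + d01 1 0 (a - n) = 0"
      using closed(2) n(2) unfolding d01_diff[OF a n(1)] by simp
    moreover have "d21 0 1 b + d10 1 0 (a - n) = 0"
      using n(3) unfolding d10_diff[OF a n(1)] by (simp add: algebra_simps)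
    ultimately have "cochain1 (a - n) b \<in> Z_C C d21 d10 d01 1"
      unfolding Z1_eq using b closed(1) by blast
    then show "emb01 b \<in> pi1 ` Z_C C d21 d10 d01 1" by (metis pi1_cochain1 image_eqI)
  qed
  then show ?thesis by (simp add: eta_eq pi1_cochain1 B_N0_def N0_def)
qed

lemma rho1_eq_B_N0_iff:
  assumes "xi \<in> A_sp C d21 d10 d01 1"
  shows "rho1 C d21 d10 d01 xi = B_N0 C d10 d01 2 \<longleftrightarrow> xi \<in> pi1 ` Z_C C d21 d10 d01 1"
proof -
  define eta where "eta = (SOME eta. eta \<in> cochains C 1 \<and> pi1 eta = xi
      \<and> pi1 (dtot d21 d10 d01 eta) = (\<lambda>p q. 0))"
  have "\<exists>eta. eta \<in> cochains C 1 \<and> pi1 eta = xi \<and> pi1 (dtot d21 d10 d01 eta) = (\<lambda>p q. 0)"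
    using assms by (auto simp: A_sp_def)
  then have "eta \<in> cochains C 1 \<and> pi1 eta = xi \<and> pi1 (dtot d21 d10 d01 eta) = (\<lambda>p q. 0)"
    unfolding eta_def by (rule someI_ex)
  then have eta: "eta \<in> cochains C 1" "pi1 eta = xi" "pi1 (dtot d21 d10 d01 eta) = (\<lambda>p q. 0)"
    by simp_all
  have "xi 0 1 = eta 0 1" using eta(2) by (auto simp: pi1_def)
  then have "rho1 C d21 d10 d01 xi =
      {(d21 0 1 (eta 0 1) + d10 1 0 (eta 1 0)) + b | b. b \<in> B_N0 C d10 d01 2}"
    unfolding rho1_def Let_def eta_def[symmetric] by simp
  then show ?thesis
    using coset_eq_subspace_iff[OF module_axioms subspace_B_N0] pi1_mem_image_Z1_iff[OF eta(1,3)] eta(2)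
    by simp
qed

lemma ker_rho1_eq: "ker_rho1 C d21 d10 d01 = pi1 ` Z_C C d21 d10 d01 1"
proof -
  have "pi1 z \<in> A_sp C d21 d10 d01 1" if "z \<in> Z_C C d21 d10 d01 1" for z
  proof -
    have "z \<in> cochains C 1" "pi1 (dtot d21 d10 d01 z) = (\<lambda>p q. 0)"
      using that by (simp_all add: Z_C_def pi1_def)
    then show ?thesis unfolding A_sp_def by blast
  qed
  then show ?thesis using rho1_eq_B_N0_iff unfolding ker_rho1_def by blast
qed

lemma component01_B1: "(\<lambda>eta. eta 0 1) ` B_C C d21 d10 d01 1 = B1_col0 C d01"
  unfolding B1_eq B1_col0_def image_image by simp

lemma pi1_B1: "pi1 ` B_C C d21 d10 d01 1 = emb01 ` B1_col0 C d01"
  unfolding B1_eq B1_col0_def image_image pi1_cochain1 by (rule refl)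

lemma component10_B1_ker: "(\<lambda>eta. eta 1 0) ` {eta \<in> B_C C d21 d10 d01 1. eta 0 1 = 0} = B_N0 C d10 d01 1"
proof -
  have "{eta \<in> B_C C d21 d10 d01 1. eta 0 1 = 0} =
      (\<lambda>x. cochain1 (d10 0 0 x) (d01 0 0 x)) ` {x \<in> C 0 0. d01 0 0 x = 0}"
    unfolding B1_eq by force
  then show ?thesis by (simp add: image_image B_N0_def N0_def)
qed

lemma component10_Z1_ker: "(\<lambda>eta. eta 1 0) ` {eta \<in> Z_C C d21 d10 d01 1. eta 0 1 = 0} = Z_N0 C d10 d01 1"
proof -
  have "{eta \<in> Z_C C d21 d10 d01 1. eta 0 1 = 0} = (\<lambda>a. cochain1 a 0) ` Z_N0 C d10 d01 1"
    unfolding Z1_eq Z_N0_def N0_def by force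
  then show ?thesis by (simp add: image_image)
qed

lemma Z_C_subset_cochains: "Z_C C d21 d10 d01 k \<subseteq> cochains C k"
  by (auto simp: Z_C_def)

lemma lin_iso_B1:
  "lin_iso (fscale scale) (pscale scale scale) (B_C C d21 d10 d01 1) (B_N0 C d10 d01 1 \<times> B1_col0 C d01)"
proof -
  have "inj_on (\<lambda>eta. eta 1 0) {eta \<in> B_C C d21 d10 d01 1. eta 0 1 = 0}"
    by (rule inj_on_subset[OF inj_on_component10]) (use B1_subset_Z1 Z_C_subset_cochains in blast)
  from exists_iso_kernel_times_image[OF linear_component[OF vector_space_axioms]
      linear_component[OF vector_space_axioms] subspace_B_C subspace_B_C order_refl this]
  show ?thesis unfolding component01_B1 component10_B1_ker lin_iso_def by auto
qed

lemma lin_iso_quot_iso_Z1: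
  "lin_iso (fscale scale) (pscale scale (fscale scale))
     (Z_C C d21 d10 d01 1) (Z_N0 C d10 d01 1 \<times> ker_rho1 C d21 d10 d01)
   \<and> quot_iso (fscale scale) (pscale scale (fscale scale))
     (Z_C C d21 d10 d01 1) (B_C C d21 d10 d01 1)
     (Z_N0 C d10 d01 1 \<times> ker_rho1 C d21 d10 d01) (B_N0 C d10 d01 1 \<times> emb01 ` B1_col0 C d01)"
proof -
  have Z_cochains: "Z_C C d21 d10 d01 1 \<subseteq> cochains C 1"
    by (rule Z_C_subset_cochains)
  then have B_cochains: "B_C C d21 d10 d01 1 \<subseteq> cochains C 1"
    using B1_subset_Z1 by blast
  have "inj_on (\<lambda>eta. eta 1 0) {eta \<in> Z_C C d21 d10 d01 1. pi1 eta = 0}"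
    unfolding Collect_pi1_eq_0[OF Z_cochains]
    by (rule inj_on_subset[OF inj_on_component10]) (use Z_cochains in blast)
  from exists_iso_kernel_times_image[OF linear_pi1[OF vector_space_axioms]
      linear_component[OF vector_space_axioms] subspace_Z_C subspace_B_C B1_subset_Z1 this]
  obtain g where g_lin: "lin_on (fscale scale) (pscale scale (fscale scale)) (Z_C C d21 d10 d01 1) g"
    and g_bij: "bij_betw g (Z_C C d21 d10 d01 1) (Z_N0 C d10 d01 1 \<times> ker_rho1 C d21 d10 d01)"
    and g_B: "\<forall>x\<in>Z_C C d21 d10 d01 1.
      g x \<in> B_N0 C d10 d01 1 \<times> emb01 ` B1_col0 C d01 \<longleftrightarrow> x \<in> B_C C d21 d10 d01 1"
    unfolding Collect_pi1_eq_0[OF B_cochains] Collect_pi1_eq_0[OF Z_cochains]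
      component10_B1_ker component10_Z1_ker pi1_B1 ker_rho1_eq[symmetric]
    by auto
  have "0 \<in> B1_col0 C d01"
    unfolding B1_col0_def by (rule rev_image_eqI[of 0]) simp_all
  then have "0 \<in> B_N0 C d10 d01 1 \<times> emb01 ` B1_col0 C d01"
    using subspace_0[OF subspace_B_N0] emb01_zero by (force simp: zero_prod_def)
  then show ?thesis
    using quot_iso_if_bij_betw[OF g_lin g_bij _ g_B] g_lin g_bij unfolding lin_iso_def by auto
qed

end

theorem corollary5p4:
  fixes scale :: "'r::field \<Rightarrow> 'v \<Rightarrow> 'v::ab_group_add"
    and C :: "nat \<Rightarrow> nat \<Rightarrow> 'v set"
    and d21 d10 d01 :: "nat \<Rightarrow> nat \<Rightarrow> 'v \<Rightarrow> 'v"
  assumes "bigraded_complex scale C d21 d10 d01"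
  shows "lin_iso (fscale scale) (pscale scale scale)
           (B_C C d21 d10 d01 1) (B_N0 C d10 d01 1 \<times> B1_col0 C d01)
       \<and> lin_iso (fscale scale) (pscale scale (fscale scale))
           (Z_C C d21 d10 d01 1) (Z_N0 C d10 d01 1 \<times> ker_rho1 C d21 d10 d01)
       \<and> quot_iso (fscale scale) (pscale scale (fscale scale))
           (Z_C C d21 d10 d01 1) (B_C C d21 d10 d01 1)
           (Z_N0 C d10 d01 1 \<times> ker_rho1 C d21 d10 d01)
           (B_N0 C d10 d01 1 \<times> emb01 ` B1_col0 C d01)"
proof -
  interpret bigraded_cochain_complex scale C d21 d10 d01
    using assms by (rule bigraded_cochain_complexI)
  show ?thesis
    using lin_iso_B1 lin_iso_quot_iso_Z1 by simp
qed

end
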